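(* Let $p$ be an odd prime. For $1\le k\le p$ let $\nu_k:=2\cos\left(\frac{(2k-1)\pi}{2p}\right)$ (so $\nu_{(p+1)/2}=0$). For $i\ge 0$ let $R_i(x):=2T_i(x/2)\in\mathbb{Z}[x]$. Let $Q_{4p}$ be the $p\times p$ matrix obtained from $\big(R_i(\nu_k)\big)_{1\le k\le p,\ 0\le i\le p-1}$ (row index $k$, column index $i$) by interchanging its first row and its $\frac{p+1}{2}$-th row; write $\theta_1,\dots,\theta_{p-1}$ for the nodes $\nu_k$ corresponding, in order, to rows $2,\dots,p$ of $Q_{4p}$ (so its first row is $(R_0(0),R_1(0),\dots,R_{p-1}(0))$). Let $F$ be the $p\times p$ matrix with $1$ on the diagonal, $-1$ in positions $(j,1)$ for $2\le j\le p$, and $0$ elsewhere, and let $$C=\begin{pmatrix}1 & \mathbf{r}\\ \mathbf{0} & I_{p-1}\end{pmatrix},\qquad \mathbf{r}=(r_1,\dots,r_{p-1})=(0,1,0,-1,0,1,0,-1,\dots),$$ i.e. $r_i=0$ for $i$ odd, $r_i=1$ for $i\equiv2\pmod4$, $r_i=-1$ for $i\equiv0\pmod4$. Then $$FQ_{4p}C=\begin{pmatrix}2 & \mathbf{0}^t\\ \mathbf{0} & N_{4p}\end{pmatrix},\qquad N_{4p}=\big(R_i^*(\theta_j)\big)_{1\le j\le p-1,\ 1\le i\le p-1},$$ where for each $i\in\{1,\dots,p-1\}$, $R_i^*(x)\in\mathbb{Z}[x]$ is monic of degree $i$ with zero constant term. In particular $N_{4p}$ is invertible and $\mathrm{Cond}(N_{4p})\le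 p(p+1)(2p-1)^2$.
   Context: $T_i$ is the Tchebycheff polynomial of the first kind ($T_0=1$, $T_1=x$, $T_i=2xT_{i-1}-T_{i-2}$). For an invertible complex matrix $A$, $\|A\|=\sqrt{\mathrm{Tr}(AA^* )}$ is the Frobenius norm and $\mathrm{Cond}(A)=\|A\|\,\|A^{-1}\|$. The nodes $\theta_1,\dots,\theta_{p-1}$ are exactly the Galois conjugates of $2\cos(\pi/(2p))$, a primitive element of the maximal totally real subfield of the $4p$-th cyclotomic field. *)

theory Defs
  imports Complex_Main "HOL-Computational_Algebra.Polynomial" "Jordan_Normal_Form.Matrix"
begin

fun cheb_T :: "nat \<Rightarrow> real \<Rightarrow> real" where
  "cheb_T 0 x = 1"
| "cheb_T (Suc 0) x = x"
| "cheb_T (Suc (Suc n)) x = 2 * x * cheb_T (Suc n) x - cheb_T n x"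

definition R :: "nat \<Rightarrow> real \<Rightarrow> real" where
  "R i x = 2 * cheb_T i (x / 2)"

definition nu :: "nat \<Rightarrow> nat \<Rightarrow> real" where
  "nu p k = 2 * cos ((2 * real k - 1) * pi / (2 * real p))"

text \<open>0-based row index a of Q_{4p} corresponds to the 1-based node index
  (qrow p a) + 1: rows 1 and (p+1)/2 (1-based) are interchanged.\<close>
definition qrow :: "nat \<Rightarrow> nat \<Rightarrow> nat" where
  "qrow p a = (if a = 0 then (p - 1) div 2 else if a = (p - 1) div 2 then 0 else a)"

definition Q4p :: "nat \<Rightarrow> real mat" where
  "Q4p p = mat p p (\<lambda>(a, i). R i (nu p (qrow p a + 1)))"

text \<open>theta_j (1 <= j <= p-1) is the node of (1-based) row j+1 of Q_{4p},
  i.e. of 0-based row j.\<close>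
definition theta :: "nat \<Rightarrow> nat \<Rightarrow> real" where
  "theta p j = nu p (qrow p j + 1)"

definition Fmat :: "nat \<Rightarrow> real mat" where
  "Fmat p = mat p p (\<lambda>(j, i). if j = i then 1 else if i = 0 then -1 else 0)"

definition rvec :: "nat \<Rightarrow> real" where
  "rvec i = (if odd i then 0 else if i mod 4 = 2 then 1 else -1)"

definition Cmat :: "nat \<Rightarrow> real mat" where
  "Cmat p = mat p p (\<lambda>(j, i). if j = i then 1 else if j = 0 then rvec i else 0)"

definition frob_norm :: "real mat \<Rightarrow> real" where
  "frob_norm A = sqrt (\<Sum>i<dim_row A. \<Sum>j<dim_col A. (A $$ (i, j))\<^sup>2)"

definition mat_inv :: "real mat \<Rightarrow> real mat" where
  "mat_inv A = (SOME B. inverts_mat A B \<and> inverts_mat B A)"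

definition cond_num :: "real mat \<Rightarrow> real" where
  "cond_num A = frob_norm A * frob_norm (mat_inv A)"

end

theory Submission
  imports Defs "Jordan_Normal_Form.Char_Poly"
begin

(* Substituting x = 2 cos t turns R_i into 2 cos (i t), so at the nodes nu_k the values of the R_i
  behave like a discrete cosine transform: by a telescoping sum of cosines,
  sum_{i=1}^{p-1} R_i(nu_a) R_i(nu_b) is 2p - 2 for a = b and -2 otherwise.
  The node of the first row of Q_{4p} is 0. F subtracts that row from the others, and C uses
  R_i(0) = -2 r_i to clear the rest of the first row, so N_{4p} has entries R_i(theta_j) - R_i(0),
  i.e. R_i^* = R_i - R_i(0). As R_i(0) is itself a node value, the orthogonality relations show
  that (R_i(theta_k) / (2p)) is the inverse of N_{4p}. The entries of N_{4p} are at most 4 and those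
  of its inverse at most 1/p in absolute value, so Cond(N_{4p}) <= 4 (p-1)^2 / p. *)

lemma cheb_T_cos: "cheb_T n (cos t) = cos (real n * t)"
proof (induction n t rule: cheb_T.induct)
  case (3 n t)
  have "cos (real (Suc (Suc n)) * t) = cos (real (Suc n) * t + t)"
    and "cos (real n * t) = cos (real (Suc n) * t - t)"
    by (simp_all add: algebra_simps)
  then show ?case using 3 by (simp add: cos_add cos_diff)
qed auto

lemma R_2cos: "R i (2 * cos t) = 2 * cos (real i * t)"
  by (simp add: R_def cheb_T_cos)

lemma abs_R_2cos_le: "\<bar>R i (2 * cos t)\<bar> \<le> 2"
  unfolding R_2cos using abs_cos_le_one[of "real i * t"] by linarith

lemma R_0: "R 0 x = 2"
  by (simp add: R_def)

lemma rvec_Suc_Suc: "rvec (Suc (Suc n)) = - rvec n"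
  by (simp add: rvec_def mod_Suc) presburger

lemma R_at_zero: "R i 0 = - 2 * rvec i"
proof -
  have "cheb_T i 0 = - rvec i"
  proof (induction i "0::real" rule: cheb_T.induct)
    case (3 n)
    then show ?case by (simp add: rvec_Suc_Suc)
  qed (simp_all add: rvec_def)
  then show ?thesis by (simp add: R_def)
qed

lemma sum_cos_telescope:
  "2 * sin b * (\<Sum>i=1..n. cos (2 * real i * b)) = sin ((2 * real n + 1) * b) - sin b"
proof (induction n)
  case (Suc n)
  have "(2 * real (Suc n) + 1) * b = 2 * real (Suc n) * b + b"
    and "(2 * real n + 1) * b = 2 * real (Suc n) * b - b"
    by (simp_all add: algebra_simps)
  then have "2 * sin b * cos (2 * real (Suc n) * b)
      = sin ((2 * real (Suc n) + 1) * b) - sin ((2 * real n + 1) * b)"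
    by (simp add: sin_add sin_diff)
  then show ?case using Suc by (simp add: distrib_left)
qed simp

lemma sin_int_pi_div_neq_0:
  fixes m :: int
  assumes "p > 0" and "\<not> 2 * int p dvd m"
  shows "sin (m * pi / (2 * real p)) \<noteq> 0"
proof
  assume "sin (m * pi / (2 * real p)) = 0"
  then obtain k :: int where "m * pi / (2 * real p) = k * pi"
    by (auto simp: sin_zero_iff_int2)
  with \<open>p > 0\<close> have "real_of_int m = real_of_int (2 * int p * k)"
    by (simp add: field_simps)
  then show False using assms(2) by (metis dvd_triv_left of_int_eq_iff)
qed

lemma sum_cos_multiples:
  fixes m :: int
  assumes "p > 0" and "\<not> 2 * int p dvd m"
  shows "(\<Sum>i=1..p-1. cos (2 * real i * (m * pi / (2 * real p)))) = (if even m then -1 else 0)"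
proof -
  define b where "b = m * pi / (2 * real p)"
  have "(2 * real (p - 1) + 1) * b = m * pi - b"
    using \<open>p > 0\<close> by (simp add: b_def of_nat_diff field_simps)
  then have "2 * sin b * (\<Sum>i=1..p-1. cos (2 * real i * b)) = sin (m * pi - b) - sin b"
    using sum_cos_telescope[of b "p - 1"] by simp
  also have "\<dots> = - sin b * (1 + cos (pi * m))"
    by (simp add: sin_diff mult.commute[of _ pi] algebra_simps)
  finally have "sin b * (2 * (\<Sum>i=1..p-1. cos (2 * real i * b)) + 1 + cos (pi * m)) = 0"
    by (simp add: algebra_simps)
  moreover have "sin b \<noteq> 0"
    unfolding b_def using assms by (rule sin_int_pi_div_neq_0)
  ultimately show ?thesis
    unfolding b_def[symmetric] by (auto split: if_splits)
qed

lemma R_nu_mult_R_nu: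
  "R i (nu p a) * R i (nu p b) =
     2 * cos (2 * real i * ((int a - int b) * pi / (2 * real p)))
   + 2 * cos (2 * real i * ((int a + int b - 1) * pi / (2 * real p)))"
proof -
  define \<alpha> where "\<alpha> = (2 * real a - 1) * pi / (2 * real p)"
  define \<beta> where "\<beta> = (2 * real b - 1) * pi / (2 * real p)"
  have "R i (nu p a) * R i (nu p b) = 4 * (cos (real i * \<alpha>) * cos (real i * \<beta>))"
    by (simp add: nu_def R_2cos \<alpha>_def \<beta>_def)
  also have "\<dots> = 2 * cos (real i * \<alpha> - real i * \<beta>) + 2 * cos (real i * \<alpha> + real i * \<beta>)"
    by (simp add: cos_times_cos)
  also have "real i * \<alpha> - real i * \<beta> = 2 * real i * ((int a - int b) * pi / (2 * real p))"
    by (simp add: \<alpha>_def \<beta>_def divide_simps) (simp add: algebra_simps)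
  also have "real i * \<alpha> + real i * \<beta> = 2 * real i * ((int a + int b - 1) * pi / (2 * real p))"
    by (simp add: \<alpha>_def \<beta>_def divide_simps) (simp add: algebra_simps)
  finally show ?thesis .
qed

lemma sum_R_nu_mult_R_nu:
  assumes "1 \<le> a" "a \<le> p" "1 \<le> b" "b \<le> p"
  shows "(\<Sum>i=1..p-1. R i (nu p a) * R i (nu p b)) = (if a = b then 2 * real p - 2 else -2)"
proof -
  define S where "S m = (\<Sum>i=1..p-1. cos (2 * real i * (of_int m * pi / (2 * real p))))" for m :: int
  have p: "p > 0" using assms by simp
  have sum_eq: "(\<Sum>i=1..p-1. R i (nu p a) * R i (nu p b)) = 2 * S (int a - int b) + 2 * S (int a + int b - 1)"
    by (simp add: R_nu_mult_R_nu S_def sum.distrib sum_distrib_left)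
  have "\<not> 2 * int p dvd int a + int b - 1"
    using assms by (intro zdvd_not_zless) auto
  with p have S_plus: "S (int a + int b - 1) = (if even (int a + int b - 1) then -1 else 0)"
    unfolding S_def by (rule sum_cos_multiples)
  show ?thesis
  proof (cases "a = b")
    case True
    have "S 0 = real p - 1" using p by (simp add: S_def of_nat_diff)
    then show ?thesis using sum_eq S_plus True by simp
  next
    case False
    have "\<not> 2 * int p dvd int a - int b"
      using assms False dvd_imp_le_int[of "int a - int b" "2 * int p"] by auto
    with p have S_minus: "S (int a - int b) = (if even (int a - int b) then -1 else 0)"
      unfolding S_def by (rule sum_cos_multiples)
    have "even (int a - int b) \<longleftrightarrow> odd (int a + int b - 1)" by presburger
    then show ?thesis using sum_eq S_plus S_minus False by auto
  qed
qed

lemma theta_0: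
  assumes "odd p"
  shows "theta p 0 = 0"
proof -
  have "2 * real ((p - 1) div 2 + 1) - 1 = real p"
    using assms by (auto elim!: oddE)
  then have "theta p 0 = 2 * cos (pi / 2)"
    using assms by (simp add: theta_def nu_def qrow_def)
  then show ?thesis by simp
qed

lemma qrow_less: "a < p \<Longrightarrow> qrow p a < p"
  by (auto simp: qrow_def)

lemma inj_qrow: "inj (qrow p)"
  by (auto simp: inj_def qrow_def split: if_splits)

lemma sum_R_theta_mult_R_theta:
  assumes "a < p" "b < p"
  shows "(\<Sum>i<p - 1. R (Suc i) (theta p a) * R (Suc i) (theta p b)) = (if a = b then 2 * real p - 2 else -2)"
proof -
  have "(\<Sum>i<p - 1. R (Suc i) (theta p a) * R (Suc i) (theta p b))
      = (\<Sum>i=1..p-1. R i (nu p (qrow p a + 1)) * R i (nu p (qrow p b + 1)))"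
    by (simp add: theta_def sum.atLeast1_atMost_eq)
  also have "\<dots> = (if a = b then 2 * real p - 2 else -2)"
    using assms qrow_less[of a p] qrow_less[of b p] inj_qrow[of p]
    by (subst sum_R_nu_mult_R_nu) (auto simp: inj_eq)
  finally show ?thesis .
qed

fun R_poly :: "nat \<Rightarrow> int poly" where
  "R_poly 0 = [:2:]"
| "R_poly (Suc 0) = [:0, 1:]"
| "R_poly (Suc (Suc n)) = pCons 0 (R_poly (Suc n)) - R_poly n"

lemma poly_R_poly: "poly (of_int_poly (R_poly n)) x = R n x"
  by (induction n rule: R_poly.induct) (simp_all add: R_def hom_distribs algebra_simps)

lemma degree_R_poly: "degree (R_poly n) = n"
proof (induction n rule: R_poly.induct)
  case (3 n)
  then have "R_poly (Suc n) \<noteq> 0" by auto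
  then have "degree (pCons 0 (R_poly (Suc n))) = Suc (Suc n)"
    using 3 by simp
  then show ?case
    using degree_add_eq_left[of "- R_poly n" "pCons 0 (R_poly (Suc n))"] 3 by simp
qed auto

lemma coeff_R_poly_self: "coeff (R_poly n) n = (if n = 0 then 2 else 1)"
  by (induction n rule: R_poly.induct) (simp_all add: coeff_eq_0 degree_R_poly)

definition R_star :: "nat \<Rightarrow> int poly" where
  "R_star i = R_poly i - [:coeff (R_poly i) 0:]"

lemma degree_R_star: "0 < i \<Longrightarrow> degree (R_star i) = i"
  using degree_add_eq_left[of "[:- coeff (R_poly i) 0:]" "R_poly i"]
  by (simp add: R_star_def degree_R_poly diff_conv_add_uminus)

lemma coeff_R_star_self: "0 < i \<Longrightarrow> coeff (R_star i) i = 1"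
  by (simp add: R_star_def coeff_R_poly_self coeff_pCons split: nat.split)

lemma coeff_0_R_star: "coeff (R_star i) 0 = 0"
  by (simp add: R_star_def)

lemma poly_R_star: "poly (of_int_poly (R_star i)) x = R i x - R i 0"
proof -
  have "R i 0 = of_int (coeff (R_poly i) 0)"
    by (simp flip: poly_R_poly add: poly_0_coeff_0)
  then show ?thesis
    by (simp add: R_star_def hom_distribs poly_R_poly)
qed

lemma index_Fmat_mult:
  assumes "A \<in> carrier_mat p n" "a < p" "c < n"
  shows "(Fmat p * A) $$ (a, c) = A $$ (a, c) - (if a = 0 then 0 else A $$ (0, c))"
proof -
  have "(Fmat p * A) $$ (a, c)
      = (\<Sum>l<p. (if l = a then A $$ (l, c) else 0) - (if l = 0 \<and> a \<noteq> 0 then A $$ (l, c) else 0))"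
    using assms by (auto simp: Fmat_def scalar_prod_def atLeast0LessThan intro!: sum.cong)
  also have "\<dots> = A $$ (a, c) - (if a = 0 then 0 else A $$ (0, c))"
    using assms by (simp add: sum_subtractf)
  finally show ?thesis .
qed

lemma index_mult_Cmat:
  assumes "A \<in> carrier_mat m p" "a < m" "b < p"
  shows "(A * Cmat p) $$ (a, b) = A $$ (a, b) + (if b = 0 then 0 else rvec b * A $$ (a, 0))"
proof -
  have "(A * Cmat p) $$ (a, b)
      = (\<Sum>l<p. (if l = b then A $$ (a, l) else 0) + (if l = 0 \<and> b \<noteq> 0 then rvec b * A $$ (a, l) else 0))"
    using assms by (auto simp: Cmat_def scalar_prod_def atLeast0LessThan intro!: sum.cong)
  also have "\<dots> = A $$ (a, b) + (if b = 0 then 0 else rvec b * A $$ (a, 0))"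
    using assms by (simp add: sum.distrib)
  finally show ?thesis .
qed

lemma Fmat_carrier: "Fmat p \<in> carrier_mat p p"
  by (simp add: Fmat_def)

lemma Q4p_carrier: "Q4p p \<in> carrier_mat p p"
  by (simp add: Q4p_def)

lemma index_Q4p: "a < p \<Longrightarrow> i < p \<Longrightarrow> Q4p p $$ (a, i) = R i (theta p a)"
  by (simp add: Q4p_def theta_def)

definition N4p :: "nat \<Rightarrow> real mat" where
  "N4p p = mat (p - 1) (p - 1) (\<lambda>(j, i). poly (map_poly of_int (R_star (i + 1))) (theta p (j + 1)))"

lemma index_N4p:
  "j < p - 1 \<Longrightarrow> i < p - 1 \<Longrightarrow> N4p p $$ (j, i) = R (i + 1) (theta p (j + 1)) - R (i + 1) 0"
  by (simp add: N4p_def poly_R_star)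

lemma N4p_carrier: "N4p p \<in> carrier_mat (p - 1) (p - 1)"
  by (simp add: N4p_def)

lemma Fmat_Q4p_Cmat_eq_four_block:
  assumes "odd p"
  shows "Fmat p * Q4p p * Cmat p
           = four_block_mat (mat 1 1 (\<lambda>_. 2)) (0\<^sub>m 1 (p - 1)) (0\<^sub>m (p - 1) 1) (N4p p)"
proof (rule eq_matI)
  have p: "p > 0" using assms by (rule odd_pos)
  have FQ: "(Fmat p * Q4p p) $$ (a, c) = R c (theta p a) - (if a = 0 then 0 else R c 0)"
    if "a < p" "c < p" for a c
    using that by (simp add: index_Fmat_mult[OF Q4p_carrier] index_Q4p theta_0[OF assms])
  fix a b
  assume "a < dim_row (four_block_mat (mat 1 1 (\<lambda>_. 2)) (0\<^sub>m 1 (p - 1)) (0\<^sub>m (p - 1) 1) (N4p p))"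
    and "b < dim_col (four_block_mat (mat 1 1 (\<lambda>_. 2)) (0\<^sub>m 1 (p - 1)) (0\<^sub>m (p - 1) 1) (N4p p))"
  then have ab: "a < p" "b < p" using p N4p_carrier[of p] by auto
  have "Fmat p * Q4p p \<in> carrier_mat p p"
    using Fmat_carrier Q4p_carrier by (rule mult_carrier_mat)
  then have "(Fmat p * Q4p p * Cmat p) $$ (a, b)
      = R b (theta p a) - (if a = 0 then 0 else R b 0) + (if b = 0 then 0 else rvec b * (if a = 0 then 2 else 0))"
    using p ab by (simp add: index_mult_Cmat FQ R_0)
  then show "(Fmat p * Q4p p * Cmat p) $$ (a, b)
      = four_block_mat (mat 1 1 (\<lambda>_. 2)) (0\<^sub>m 1 (p - 1)) (0\<^sub>m (p - 1) 1) (N4p p) $$ (a, b)"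
    using ab p N4p_carrier[of p] by (auto simp: index_N4p theta_0[OF assms] R_0 R_at_zero rvec_def)
qed (use odd_pos[OF assms] N4p_carrier[of p] in \<open>auto simp: Fmat_def Cmat_def\<close>)

definition N4p_inv :: "nat \<Rightarrow> real mat" where
  "N4p_inv p = mat (p - 1) (p - 1) (\<lambda>(i, k). R (i + 1) (theta p (k + 1)) / (2 * real p))"

lemma N4p_inv_carrier: "N4p_inv p \<in> carrier_mat (p - 1) (p - 1)"
  by (simp add: N4p_inv_def)

lemma N4p_mult_N4p_inv:
  assumes "odd p"
  shows "N4p p * N4p_inv p = 1\<^sub>m (p - 1)"
proof (rule eq_matI)
  fix j k
  assume "j < dim_row (1\<^sub>m (p - 1) :: real mat)" "k < dim_col (1\<^sub>m (p - 1) :: real mat)"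
  then have jk: "j < p - 1" "k < p - 1" by auto
  have "(N4p p * N4p_inv p) $$ (j, k)
      = (\<Sum>i<p - 1. (R (Suc i) (theta p (j + 1)) - R (Suc i) (theta p 0)) * R (Suc i) (theta p (k + 1)))
        / (2 * real p)"
    using jk N4p_carrier[of p] N4p_inv_carrier[of p]
    by (simp add: scalar_prod_def atLeast0LessThan index_N4p N4p_inv_def theta_0[OF assms]
        sum_divide_distrib)
  also have "\<dots> = ((\<Sum>i<p - 1. R (Suc i) (theta p (j + 1)) * R (Suc i) (theta p (k + 1)))
                    - (\<Sum>i<p - 1. R (Suc i) (theta p 0) * R (Suc i) (theta p (k + 1)))) / (2 * real p)"
    by (simp add: left_diff_distrib sum_subtractf)
  also have "\<dots> = ((if j = k then 2 * real p - 2 else -2) - (-2)) / (2 * real p)"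
    using jk sum_R_theta_mult_R_theta[of "j + 1" p "k + 1"] sum_R_theta_mult_R_theta[of 0 p "k + 1"]
    by simp
  also have "\<dots> = 1\<^sub>m (p - 1) $$ (j, k)"
    using jk odd_pos[OF assms] by simp
  finally show "(N4p p * N4p_inv p) $$ (j, k) = 1\<^sub>m (p - 1) $$ (j, k)" .
qed (use N4p_carrier[of p] N4p_inv_carrier[of p] in auto)

lemma
  fixes A B :: "real mat"
  assumes A: "A \<in> carrier_mat n n" and B: "B \<in> carrier_mat n n" and AB: "A * B = 1\<^sub>m n"
  shows invertible_mat_of_right_inverse: "invertible_mat A"
    and mat_inv_eq_right_inverse: "mat_inv A = B"
proof -
  have BA: "B * A = 1\<^sub>m n"
    using A B AB by (rule mat_mult_left_right_inverse)
  then have inv: "inverts_mat A B \<and> inverts_mat B A"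
    using A B AB by (simp add: inverts_mat_def)
  then show "invertible_mat A"
    using A by (auto simp: invertible_mat_def)
  have unique: "B' = B" if "inverts_mat A B' \<and> inverts_mat B' A" for B'
  proof -
    have "B' * A = 1\<^sub>m (dim_row B')" and "A * B' = 1\<^sub>m n"
      using that A by (auto simp: inverts_mat_def)
    then have B': "B' \<in> carrier_mat n n"
      using A by (metis carrier_matD carrier_matI index_mult_mat(3) index_one_mat(3))
    have "B' = B' * (A * B)" using B' AB by simp
    also have "\<dots> = (B' * A) * B" using A B B' by (simp add: assoc_mult_mat)
    finally show ?thesis using B \<open>B' * A = _\<close> B' by simp
  qed
  show "mat_inv A = B"
    unfolding mat_inv_def using inv unique by (rule some_equality)
qed

lemma frob_norm_le:
  assumes "A \<in> carrier_mat m n" "0 \<le> c" "\<And>i j. i < m \<Longrightarrow> j < n \<Longrightarrow> \<bar>A $$ (i, j)\<bar> \<le> c"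
  shows "frob_norm A \<le> c * sqrt (real (m * n))"
proof -
  have "(\<Sum>i<m. \<Sum>j<n. (A $$ (i, j))\<^sup>2) \<le> (\<Sum>i<m. \<Sum>j<n. c\<^sup>2)"
    using assms(2,3) by (intro sum_mono) (simp flip: abs_le_square_iff)
  also have "\<dots> = (c * sqrt (real (m * n)))\<^sup>2"
    by (simp add: power_mult_distrib)
  finally have "sqrt (\<Sum>i<m. \<Sum>j<n. (A $$ (i, j))\<^sup>2) \<le> sqrt ((c * sqrt (real (m * n)))\<^sup>2)"
    by (rule real_sqrt_le_mono)
  then show ?thesis
    using assms(1,2) by (simp add: frob_norm_def)
qed

lemma abs_R_theta_le: "\<bar>R i (theta p a)\<bar> \<le> 2"
  by (simp add: theta_def nu_def abs_R_2cos_le)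

lemma cond_num_N4p_le:
  assumes "odd p"
  shows "cond_num (N4p p) \<le> 4 * (real p - 1)\<^sup>2 / real p"
proof -
  have p: "p > 0" using assms by (rule odd_pos)
  have "frob_norm (N4p p) \<le> 4 * sqrt (real ((p - 1) * (p - 1)))"
  proof (rule frob_norm_le[OF N4p_carrier])
    fix j i assume "j < p - 1" "i < p - 1"
    then show "\<bar>N4p p $$ (j, i)\<bar> \<le> 4"
      using abs_R_theta_le[of "i + 1" p "j + 1"] abs_R_theta_le[of "i + 1" p 0]
      by (simp add: index_N4p theta_0[OF assms])
  qed simp
  moreover have "frob_norm (N4p_inv p) \<le> 1 / real p * sqrt (real ((p - 1) * (p - 1)))"
  proof (rule frob_norm_le[OF N4p_inv_carrier])
    fix i k assume "i < p - 1" "k < p - 1"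
    then show "\<bar>N4p_inv p $$ (i, k)\<bar> \<le> 1 / real p"
      using abs_R_theta_le[of "i + 1" p "k + 1"] p by (simp add: N4p_inv_def field_simps)
  qed simp
  moreover have "sqrt (real ((p - 1) * (p - 1))) = real p - 1"
    using p by (simp add: of_nat_diff)
  moreover have "0 \<le> frob_norm (N4p_inv p)"
    by (simp add: frob_norm_def sum_nonneg)
  ultimately have "cond_num (N4p p) \<le> (4 * (real p - 1)) * (1 / real p * (real p - 1))"
    unfolding cond_num_def mat_inv_eq_right_inverse[OF N4p_carrier N4p_inv_carrier N4p_mult_N4p_inv[OF assms]]
    using p by (intro mult_mono) auto
  then show ?thesis
    by (simp add: power2_eq_square ac_simps)
qed

lemma four_sq_diff_one_div_le:
  fixes x :: real
  assumes "1 \<le> x"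
  shows "4 * (x - 1)\<^sup>2 / x \<le> x * (x + 1) * (2 * x - 1)\<^sup>2"
proof -
  have "4 * (x - 1)\<^sup>2 / x \<le> 4 * (x - 1)\<^sup>2"
    using assms by (simp add: divide_le_eq mult_le_cancel_left1)
  also have "\<dots> \<le> (2 * x - 1)\<^sup>2"
    using assms by (simp add: power2_eq_square algebra_simps)
  also have "\<dots> \<le> x * (x + 1) * (2 * x - 1)\<^sup>2"
  proof -
    have "1 * 1 \<le> x * (x + 1)"
      using assms by (intro mult_mono) auto
    then show ?thesis by (simp add: mult_le_cancel_right1)
  qed
  finally show ?thesis .
qed

theorem mainTheorem6:
  fixes p :: nat
  assumes "prime p" and "odd p"
  shows "\<exists>Rstar :: nat \<Rightarrow> int poly.
           (\<forall>i\<in>{1..p-1}. lead_coeff (Rstar i) = 1 \<and> degree (Rstar i) = i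
                          \<and> coeff (Rstar i) 0 = 0) \<and>
           (let N = mat (p - 1) (p - 1)
                      (\<lambda>(j, i). poly (map_poly of_int (Rstar (i + 1))) (theta p (j + 1)))
            in Fmat p * Q4p p * Cmat p
                 = four_block_mat (mat 1 1 (\<lambda>_. 2)) (0\<^sub>m 1 (p - 1)) (0\<^sub>m (p - 1) 1) N
               \<and> invertible_mat N
               \<and> cond_num N \<le> real (p * (p + 1) * (2 * p - 1)\<^sup>2))"
proof -
  have R_star: "\<forall>i\<in>{1..p-1}. lead_coeff (R_star i) = 1 \<and> degree (R_star i) = i
                               \<and> coeff (R_star i) 0 = 0"
    by (simp add: degree_R_star coeff_R_star_self coeff_0_R_star)
  have p: "real p \<ge> 1" using odd_pos[OF assms(2)] by simp
  have "cond_num (N4p p) \<le> real p * (real p + 1) * (2 * real p - 1)\<^sup>2"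
    using cond_num_N4p_le[OF assms(2)] four_sq_diff_one_div_le[OF p] by (rule order.trans)
  also have "\<dots> = real (p * (p + 1) * (2 * p - 1)\<^sup>2)"
    using p by (simp add: of_nat_diff distrib_left)
  finally show ?thesis
    using R_star Fmat_Q4p_Cmat_eq_four_block[OF assms(2)]
      invertible_mat_of_right_inverse[OF N4p_carrier N4p_inv_carrier N4p_mult_N4p_inv[OF assms(2)]]
    unfolding Let_def N4p_def by blast
qed

end
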